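(* Let $x\in\mathrm{Cay}_n$. (1) If $y\in\mathrm{Cay}_k$ and $y\le x$, then $\gamma(y)\le\gamma(x)$. (2) If $\sigma\in\mathcal{S}_k$ and $\sigma\le\gamma(x)$, then there exists $y\in\mathrm{Cay}_k$ such that $y\le x$ and $\gamma(y)=\sigma$.
   Context: $\mathrm{Cay}_n$ is the set of Cayley permutations of length $n$ (words of positive integers in which every integer from $1$ to the maximum occurs); $\mathcal{S}_k$ is the set of permutations of $[k]$. Containment $y\le x$: indices $i_1<\dots<i_k$ with $x(i_s)<x(i_t)\iff y(s)<y(t)$ and $x(i_s)=x(i_t)\iff y(s)=y(t)$. For $x\in\mathrm{Cay}_n$, $\gamma(x)\in\mathcal{S}_n$ is obtained by sorting the pairs $(x(i),i)$ increasingly by first coordinate, ties by decreasing second coordinate, and reading the second coordinates. *)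

theory Defs
  imports Main "HOL-Library.Product_Lexorder"
begin

text \<open>Words are lists of natural numbers; positions are 1-based in the paper,
  0-based for list indexing (x ! (i-1) is x(i)).\<close>

definition Cay :: "nat \<Rightarrow> nat list set" where
  "Cay n = {x. length x = n \<and> (\<exists>m. set x = {1..m})}"

definition Perms :: "nat \<Rightarrow> nat list set" where
  "Perms k = {s. length s = k \<and> distinct s \<and> set s = {1..k}}"

definition pat_le :: "nat list \<Rightarrow> nat list \<Rightarrow> bool" where
  "pat_le y x \<longleftrightarrow> (\<exists>idx :: nat list.
      length idx = length y \<and> sorted_wrt (<) idx \<and> (\<forall>j\<in>set idx. j < length x) \<and>
      (\<forall>s<length y. \<forall>t<length y.
          (x ! (idx ! s) < x ! (idx ! t) \<longleftrightarrow> y ! s < y ! t) \<and>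
          (x ! (idx ! s) = x ! (idx ! t) \<longleftrightarrow> y ! s = y ! t)))"

text \<open>gamma: sort the pairs (x(i), i) increasingly by first coordinate, ties by
  decreasing second coordinate, and read off the second coordinates.\<close>
definition gamma :: "nat list \<Rightarrow> nat list" where
  "gamma x = sort_key (\<lambda>i. (x ! (i - 1), - int i)) [1..<length x + 1]"

end

theory Submission
  imports Defs
begin

text \<open>\<open>gamma x\<close> lists the positions of \<open>x\<close> sorted by the key \<open>i \<mapsto> (x(i), -i)\<close>, and it is the
  only key-sorted list of all positions. An occurrence of \<open>y\<close> in \<open>x\<close> at positions
  \<open>i\<^sub>1 < \<dots> < i\<^sub>k\<close> transports the key order of \<open>y\<close> to that of \<open>x\<close> (values are compared in the same
  way, and ties are broken by position in the same way), so \<open>q \<mapsto> i\<^sub>q\<close> maps \<open>gamma y\<close> onto the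
  subsequence of \<open>gamma x\<close> formed by \<open>i\<^sub>1, \<dots>, i\<^sub>k\<close>. Since \<open>q \<mapsto> i\<^sub>q\<close> is increasing, that
  subsequence is an occurrence of \<open>gamma y\<close>. Conversely, an occurrence of \<open>\<sigma>\<close> in \<open>gamma x\<close> is a
  key-sorted set of positions of \<open>x\<close>; standardizing the subword of \<open>x\<close> at these positions gives
  \<open>y\<close>, and the same transport shows that \<open>gamma y\<close> is order-isomorphic to \<open>\<sigma>\<close>, hence equal
  to it.\<close>

definition order_isomorphic :: "'a::linorder list \<Rightarrow> 'b::linorder list \<Rightarrow> bool" where
  "order_isomorphic y z \<longleftrightarrow>
     length y = length z \<and> (\<forall>s<length y. \<forall>t<length y. y ! s < y ! t \<longleftrightarrow> z ! s < z ! t)"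

lemma order_isomorphic_refl: "order_isomorphic y y"
  by (simp add: order_isomorphic_def)

lemma order_isomorphic_sym: "order_isomorphic y z \<Longrightarrow> order_isomorphic z y"
  by (simp add: order_isomorphic_def)

lemma order_isomorphic_trans:
  "order_isomorphic y z \<Longrightarrow> order_isomorphic z w \<Longrightarrow> order_isomorphic y w"
  by (simp add: order_isomorphic_def)

lemma order_isomorphic_nth_eq_iff:
  assumes "order_isomorphic y z" "s < length y" "t < length y"
  shows "y ! s = y ! t \<longleftrightarrow> z ! s = z ! t"
  using assms unfolding order_isomorphic_def by (metis linorder_neq_iff)

lemma order_isomorphic_map_strict_mono:
  assumes "strict_mono_on A f" "set y \<subseteq> A"
  shows "order_isomorphic y (map f y)"
  using strict_mono_on_less[OF assms(1)] assms(2) by (auto simp: order_isomorphic_def subset_eq)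

text \<open>The equality clause in the definition of containment is implied by the order clause.\<close>
lemma pat_le_iff_order_isomorphic:
  "pat_le y x \<longleftrightarrow> (\<exists>idx. sorted_wrt (<) idx \<and> set idx \<subseteq> {..<length x} \<and>
                              order_isomorphic y (map ((!) x) idx))"
proof -
  have "order_isomorphic y (map ((!) x) idx) \<longleftrightarrow>
          length idx = length y \<and>
          (\<forall>s<length y. \<forall>t<length y.
             (x ! (idx ! s) < x ! (idx ! t) \<longleftrightarrow> y ! s < y ! t) \<and>
             (x ! (idx ! s) = x ! (idx ! t) \<longleftrightarrow> y ! s = y ! t))" for idx
    using order_isomorphic_nth_eq_iff[of y "map ((!) x) idx"]
    by (auto simp: order_isomorphic_def)
  then show ?thesis
    unfolding pat_le_def by (auto simp: subset_eq)
qed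

lemma pat_le_order_isomorphic:
  assumes "order_isomorphic y z" "pat_le z x"
  shows "pat_le y x"
  using assms order_isomorphic_trans by (meson pat_le_iff_order_isomorphic)

lemma pat_le_filter: "pat_le (filter P x) x"
proof -
  have "filter P x = map ((!) x) (filter (P \<circ> (!) x) [0..<length x])"
    by (metis filter_map map_nth)
  then show ?thesis
    unfolding pat_le_iff_order_isomorphic
    by (intro exI[of _ "filter (P \<circ> (!) x) [0..<length x]"])
       (auto intro: sorted_wrt_filter simp: order_isomorphic_refl)
qed

lemma Perms_nth_eq_Suc_card:
  assumes "\<pi> \<in> Perms k" "s < k"
  shows "\<pi> ! s = Suc (card {t. t < k \<and> \<pi> ! t < \<pi> ! s})"
proof -
  have len: "length \<pi> = k" and dist: "distinct \<pi>" and set: "set \<pi> = {1..k}"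
    using assms(1) by (auto simp: Perms_def)
  have "\<pi> ! s \<in> {1..k}" using nth_mem[of s \<pi>] len set assms(2) by auto
  have "(!) \<pi> ` {t. t < k \<and> \<pi> ! t < \<pi> ! s} = {v \<in> set \<pi>. v < \<pi> ! s}"
    using len by (auto simp: in_set_conv_nth)
  also have "\<dots> = {1..<\<pi> ! s}" using set \<open>\<pi> ! s \<in> {1..k}\<close> by auto
  finally have "card {t. t < k \<and> \<pi> ! t < \<pi> ! s} = \<pi> ! s - 1"
    using card_image[OF inj_on_nth[OF dist, of "{t. t < k \<and> \<pi> ! t < \<pi> ! s}"]] len
    by auto
  then show ?thesis using \<open>\<pi> ! s \<in> {1..k}\<close> by simp
qed

lemma Perms_order_isomorphic_eq:
  assumes "\<sigma> \<in> Perms k" "\<tau> \<in> Perms k" "order_isomorphic \<sigma> \<tau>"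
  shows "\<sigma> = \<tau>"
proof -
  have "length \<sigma> = k" "length \<tau> = k" using assms(1,2) by (auto simp: Perms_def)
  moreover have "\<sigma> ! s = \<tau> ! s" if "s < k" for s
  proof -
    have "{t. t < k \<and> \<sigma> ! t < \<sigma> ! s} = {t. t < k \<and> \<tau> ! t < \<tau> ! s}"
      using assms(3) that \<open>length \<sigma> = k\<close> by (auto simp: order_isomorphic_def)
    then show ?thesis
      using Perms_nth_eq_Suc_card[OF assms(1) that] Perms_nth_eq_Suc_card[OF assms(2) that] by simp
  qed
  ultimately show ?thesis by (simp add: nth_equalityI)
qed

lemma ex_Cay_order_isomorphic:
  fixes w :: "'a::linorder list"
  shows "\<exists>y \<in> Cay (length w). order_isomorphic y w"
proof -
  define rank where "rank v = Suc (card {u \<in> set w. u < v})" for v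
  have "strict_mono_on (set w) rank"
    by (auto intro!: strict_mono_onI psubset_card_mono simp: rank_def)
  then have iso: "order_isomorphic (map rank w) w"
    using order_isomorphic_map_strict_mono order_isomorphic_sym by blast
  have "card {u \<in> set w. u < v} < card (set w)" if "v \<in> set w" for v
    using that by (intro psubset_card_mono) auto
  then have "rank ` set w \<subseteq> {1..card (set w)}"
    by (auto simp: rank_def Suc_le_eq)
  moreover have "card (rank ` set w) = card {1..card (set w)}"
    using card_image[OF strict_mono_on_imp_inj_on[OF \<open>strict_mono_on (set w) rank\<close>]] by simp
  ultimately have "set (map rank w) = {1..card (set w)}"
    by (simp add: card_subset_eq)
  then have "map rank w \<in> Cay (length w)" by (auto simp: Cay_def)
  with iso show ?thesis by blast
qed

lemma sorted_wrt_map_nth: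
  assumes "sorted_wrt R xs" "sorted_wrt (<) idx" "set idx \<subseteq> {..<length xs}"
  shows "sorted_wrt R (map ((!) xs) idx)"
  unfolding sorted_wrt_iff_nth_less
proof (intro allI impI)
  fix a b assume "a < b" "b < length (map ((!) xs) idx)"
  then have "idx ! a < idx ! b" "idx ! b < length xs"
    using sorted_wrt_nth_less[OF assms(2)] nth_mem[of b idx] assms(3) by (simp_all add: subset_eq)
  then show "R (map ((!) xs) idx ! a) (map ((!) xs) idx ! b)"
    using sorted_wrt_nth_less[OF assms(1)] \<open>a < b\<close> \<open>b < length (map ((!) xs) idx)\<close> by simp
qed

lemma sorted_wrt_key_unique:
  fixes f :: "'a \<Rightarrow> 'b::linorder"
  assumes "inj f" "sorted_wrt (\<lambda>a b. f a < f b) xs" "sorted_wrt (\<lambda>a b. f a < f b) ys"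
    "set xs = set ys"
  shows "xs = ys"
proof -
  have "map f xs = map f ys"
    using assms by (intro strict_sorted_equal) (simp_all add: sorted_wrt_map)
  then show ?thesis using assms(1) by simp
qed

definition gamma_key :: "nat list \<Rightarrow> nat \<Rightarrow> nat \<times> int" where
  "gamma_key w i = (w ! (i - 1), - int i)"

abbreviation gamma_sorted :: "nat list \<Rightarrow> nat list \<Rightarrow> bool" where
  "gamma_sorted w zs \<equiv> sorted_wrt (\<lambda>i j. gamma_key w i < gamma_key w j) zs"

lemma gamma_eq_sort_key: "gamma w = sort_key (gamma_key w) [1..<length w + 1]"
  by (simp only: gamma_def gamma_key_def[abs_def])

lemma inj_gamma_key: "inj (gamma_key w)"
  by (auto simp: inj_def gamma_key_def)

lemma length_gamma [simp]: "length (gamma w) = length w"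
  by (simp add: gamma_eq_sort_key del: upt_Suc)

lemma set_gamma [simp]: "set (gamma w) = {1..length w}"
  by (simp add: gamma_eq_sort_key atLeastLessThanSuc_atLeastAtMost del: upt_Suc)

lemma gamma_sorted_gamma: "gamma_sorted w (gamma w)"
proof -
  have "sorted_wrt (<) (map (gamma_key w) (gamma w))"
    unfolding strict_sorted_iff
    by (simp add: gamma_eq_sort_key distinct_map inj_on_subset[OF inj_gamma_key])
  then show ?thesis by (simp add: sorted_wrt_map)
qed

lemma gamma_in_Perms: "gamma w \<in> Perms (length w)"
  using length_gamma set_gamma by (simp add: Perms_def gamma_eq_sort_key del: upt_Suc)

lemma filter_gamma_eq:
  assumes "gamma_sorted x zs" "set zs \<subseteq> {1..length x}"
  shows "filter (\<lambda>i. i \<in> set zs) (gamma x) = zs"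
  using assms sorted_wrt_filter[OF gamma_sorted_gamma]
  by (intro sorted_wrt_key_unique[OF inj_gamma_key]) auto

definition occurrence_position :: "nat list \<Rightarrow> nat \<Rightarrow> nat" where
  "occurrence_position idx q = Suc (idx ! (q - 1))"

lemma strict_mono_on_occurrence_position:
  assumes "sorted_wrt (<) idx"
  shows "strict_mono_on {1..length idx} (occurrence_position idx)"
  unfolding occurrence_position_def
  by (intro strict_mono_onI) (auto intro!: sorted_wrt_nth_less[OF assms])

lemma gamma_key_occurrence_position_less_iff:
  assumes "sorted_wrt (<) idx" "order_isomorphic y (map ((!) x) idx)"
    "q \<in> {1..length y}" "q' \<in> {1..length y}"
  shows "gamma_key x (occurrence_position idx q) < gamma_key x (occurrence_position idx q')
           \<longleftrightarrow> gamma_key y q < gamma_key y q'"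
proof -
  have len: "length idx = length y" using assms(2) by (simp add: order_isomorphic_def)
  have "occurrence_position idx q' < occurrence_position idx q \<longleftrightarrow> q' < q"
    using strict_mono_on_less[OF strict_mono_on_occurrence_position[OF assms(1)]] assms(3,4) len
    by simp
  moreover have "x ! (idx ! (q - 1)) < x ! (idx ! (q' - 1)) \<longleftrightarrow> y ! (q - 1) < y ! (q' - 1)"
    "x ! (idx ! (q - 1)) = x ! (idx ! (q' - 1)) \<longleftrightarrow> y ! (q - 1) = y ! (q' - 1)"
    using assms(2-4) order_isomorphic_nth_eq_iff[OF assms(2), of "q - 1" "q' - 1"] len
    by (auto simp: order_isomorphic_def)
  ultimately show ?thesis
    by (auto simp: gamma_key_def occurrence_position_def less_le)
qed

lemma image_occurrence_position:
  "occurrence_position idx ` {1..length idx} = Suc ` set idx"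
proof -
  have "{1..length idx} = Suc ` {..<length idx}"
    by (simp add: image_Suc_lessThan)
  then have "occurrence_position idx ` {1..length idx} = Suc ` (!) idx ` {..<length idx}"
    by (simp add: image_image occurrence_position_def)
  then show ?thesis by (simp add: nth_image lessThan_atLeast0)
qed

lemma map_occurrence_position_gamma:
  assumes "sorted_wrt (<) idx" "set idx \<subseteq> {..<length x}" "order_isomorphic y (map ((!) x) idx)"
  shows "map (occurrence_position idx) (gamma y) = filter (\<lambda>i. i \<in> Suc ` set idx) (gamma x)"
proof -
  have len: "length idx = length y" using assms(3) by (simp add: order_isomorphic_def)
  have set_eq: "set (map (occurrence_position idx) (gamma y)) = Suc ` set idx"
    using image_occurrence_position[of idx] len by simp
  have "gamma_sorted x (map (occurrence_position idx) (gamma y))"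
    unfolding sorted_wrt_map
    by (rule sorted_wrt_mono_rel[OF _ gamma_sorted_gamma])
      (simp add: gamma_key_occurrence_position_less_iff[OF assms(1,3)])
  moreover have "Suc ` set idx \<subseteq> {1..length x}" using assms(2) by auto
  ultimately show ?thesis
    using filter_gamma_eq set_eq by metis
qed

lemma pat_le_gamma:
  assumes "pat_le y x"
  shows "pat_le (gamma y) (gamma x)"
proof -
  obtain idx where idx: "sorted_wrt (<) idx" "set idx \<subseteq> {..<length x}"
    "order_isomorphic y (map ((!) x) idx)"
    using assms pat_le_iff_order_isomorphic by blast
  then have "length idx = length y" by (simp add: order_isomorphic_def)
  then have "order_isomorphic (gamma y) (map (occurrence_position idx) (gamma y))"
    using order_isomorphic_map_strict_mono[OF strict_mono_on_occurrence_position[OF idx(1)]]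
    by simp
  then show ?thesis
    using pat_le_order_isomorphic pat_le_filter map_occurrence_position_gamma[OF idx] by metis
qed

lemma image_Suc_filter_upt:
  assumes "A \<subseteq> {1..n}"
  shows "Suc ` set (filter (\<lambda>j. Suc j \<in> A) [0..<n]) = A"
proof (intro equalityI subsetI)
  fix i assume "i \<in> A"
  then have "i = Suc (i - 1)" "i - 1 \<in> set (filter (\<lambda>j. Suc j \<in> A) [0..<n])"
    using assms by (auto simp: subset_eq)
  then show "i \<in> Suc ` set (filter (\<lambda>j. Suc j \<in> A) [0..<n])" by blast
qed auto

lemma pat_le_gamma_Perms:
  assumes "\<sigma> \<in> Perms k" "pat_le \<sigma> (gamma x)"
  shows "\<exists>y \<in> Cay k. pat_le y x \<and> gamma y = \<sigma>"
proof -
  obtain idx where idx: "sorted_wrt (<) idx" "set idx \<subseteq> {..<length x}"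
    and \<sigma>_iso: "order_isomorphic \<sigma> (map ((!) (gamma x)) idx)"
    using assms(2) pat_le_iff_order_isomorphic by auto
  define zs where "zs = map ((!) (gamma x)) idx"
  have zs_sorted: "gamma_sorted x zs"
    unfolding zs_def using sorted_wrt_map_nth[OF gamma_sorted_gamma idx(1)] idx(2) by simp
  have "set zs \<subseteq> set (gamma x)"
    unfolding zs_def using idx(2) by (auto simp del: set_gamma)
  then have zs_set: "set zs \<subseteq> {1..length x}" by simp
  define pos where "pos = filter (\<lambda>j. Suc j \<in> set zs) [0..<length x]"
  have pos: "sorted_wrt (<) pos" "set pos \<subseteq> {..<length x}"
    by (auto simp: pos_def intro: sorted_wrt_filter)
  have "Suc ` set pos = set zs"
    unfolding pos_def using zs_set by (rule image_Suc_filter_upt)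
  obtain y where y: "y \<in> Cay (length pos)" "order_isomorphic y (map ((!) x) pos)"
    using ex_Cay_order_isomorphic[of "map ((!) x) pos"] unfolding length_map by blast
  have "pat_le y x"
    using pos y(2) pat_le_iff_order_isomorphic by blast
  have "map (occurrence_position pos) (gamma y) = zs"
    using map_occurrence_position_gamma[OF pos y(2)] \<open>Suc ` set pos = set zs\<close>
      filter_gamma_eq[OF zs_sorted zs_set] by simp
  moreover have "length pos = length y"
    using y(2) by (simp add: order_isomorphic_def)
  ultimately have "order_isomorphic (gamma y) zs"
    using order_isomorphic_map_strict_mono[OF strict_mono_on_occurrence_position[OF pos(1)],
        of "gamma y"]
    by simp
  then have iso: "order_isomorphic (gamma y) \<sigma>"
    using order_isomorphic_trans order_isomorphic_sym[OF \<sigma>_iso[folded zs_def]] by blast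
  then have "length y = k"
    using assms(1) by (simp add: order_isomorphic_def Perms_def)
  then have "gamma y \<in> Perms k"
    using gamma_in_Perms[of y] by simp
  then have "gamma y = \<sigma>"
    using assms(1) iso by (rule Perms_order_isomorphic_eq)
  moreover have "y \<in> Cay k"
    using y(1) \<open>length pos = length y\<close> \<open>length y = k\<close> by simp
  ultimately show ?thesis
    using \<open>pat_le y x\<close> by blast
qed

theorem corollary4p7:
  fixes x :: "nat list" and n :: nat
  assumes "x \<in> Cay n"
  shows "(\<forall>k y. y \<in> Cay k \<and> pat_le y x \<longrightarrow> pat_le (gamma y) (gamma x)) \<and>
         (\<forall>k \<sigma>. \<sigma> \<in> Perms k \<and> pat_le \<sigma> (gamma x) \<longrightarrow>
             (\<exists>y \<in> Cay k. pat_le y x \<and> gamma y = \<sigma>))"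
  using pat_le_gamma pat_le_gamma_Perms by blast

end
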